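(* Let $\Gamma\subseteq G_1$ be a subgroup acting freely on $\mathbb{H}^2$. Then $h(\Gamma)$ is abelian, and there exists a complex plane $\mathbb{C}_I=\mathbb{R}+\mathbb{R}I$ (for some imaginary unit $I\in\mathbb{H}$, $I^2=-1$) containing every $a\in\mathbb{H}$ such that $\begin{pmatrix}a&b\\0&1\end{pmatrix}\in h(\Gamma)$ for some $b\in\mathbb{H}$.
   Context: $G_1=\left\{\begin{pmatrix} a&b&r\\ 0&1&s\\ 0&0&1\end{pmatrix}: a,b,r,s\in\mathbb{H}, a\neq0\right\}$, acting on $(x,y)\in\mathbb{H}^2$ by $(x,y)\mapsto(ax+by+r,y+s)$. For such a matrix $A$, $h(A)=\begin{pmatrix}a&b\\0&1\end{pmatrix}$ is its holonomy part, and $h(\Gamma)=\{h(A):A\in\Gamma\}$. *)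

theory Defs
  imports Complex_Main "HOL-Algebra.Group"
begin

datatype quat = Quat (qr: real) (qi: real) (qj: real) (qk: real)

lemma quat_eqI: "qr x = qr y \<Longrightarrow> qi x = qi y \<Longrightarrow> qj x = qj y \<Longrightarrow> qk x = qk y \<Longrightarrow> x = y"
  by (cases x; cases y) auto

lemma quat_eq_iff: "x = y \<longleftrightarrow> qr x = qr y \<and> qi x = qi y \<and> qj x = qj y \<and> qk x = qk y"
  by (auto intro: quat_eqI)

instantiation quat :: ring_1
begin
definition "0 = Quat 0 0 0 0"
definition "1 = Quat 1 0 0 0"
definition "x + y = Quat (qr x + qr y) (qi x + qi y) (qj x + qj y) (qk x + qk y)"
definition "- x = Quat (- qr x) (- qi x) (- qj x) (- qk x)"
definition "x - y = Quat (qr x - qr y) (qi x - qi y) (qj x - qj y) (qk x - qk y)"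
definition "x * y = Quat
   (qr x * qr y - qi x * qi y - qj x * qj y - qk x * qk y)
   (qr x * qi y + qi x * qr y + qj x * qk y - qk x * qj y)
   (qr x * qj y - qi x * qk y + qj x * qr y + qk x * qi y)
   (qr x * qk y + qi x * qj y - qj x * qi y + qk x * qr y)"
instance
  by standard (auto simp: quat_eq_iff zero_quat_def one_quat_def plus_quat_def
      uminus_quat_def minus_quat_def times_quat_def algebra_simps)
end

instantiation quat :: real_algebra_1
begin
definition "scaleR c x = Quat (c * qr x) (c * qi x) (c * qj x) (c * qk x)"
instance
  by standard (auto simp: quat_eq_iff zero_quat_def one_quat_def plus_quat_def
      uminus_quat_def minus_quat_def times_quat_def scaleR_quat_def algebra_simps)
end

definition complex_plane :: "quat \<Rightarrow> quat set" where
  "complex_plane I = {of_real x + of_real y * I | x y. True}"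

text \<open>The matrix ((a,b,r),(0,1,s),(0,0,1)) is represented by the tuple (a,b,r,s).\<close>
type_synonym g1 = "quat \<times> quat \<times> quat \<times> quat"

definition g1_mult :: "g1 \<Rightarrow> g1 \<Rightarrow> g1" where
  "g1_mult A B = (case A of (a,b,r,s) \<Rightarrow> case B of (a',b',r',s') \<Rightarrow>
      (a * a', a * b' + b, a * r' + b * s' + r, s + s'))"

definition G1 :: "g1 monoid" where
  "G1 = \<lparr> carrier = {(a,b,r,s). a \<noteq> 0}, mult = g1_mult, one = (1,0,0,0) \<rparr>"

definition g1_act :: "g1 \<Rightarrow> quat \<times> quat \<Rightarrow> quat \<times> quat" where
  "g1_act A p = (case A of (a,b,r,s) \<Rightarrow> case p of (x,y) \<Rightarrow> (a*x + b*y + r, y + s))"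

definition acts_freely :: "g1 set \<Rightarrow> bool" where
  "acts_freely \<Gamma> \<longleftrightarrow> (\<forall>A\<in>\<Gamma>. \<forall>p. g1_act A p = p \<longrightarrow> A = \<one>\<^bsub>G1\<^esub>)"

text \<open>Holonomy part: the matrix ((a,b),(0,1)), represented by (a,b).\<close>
definition hol :: "g1 \<Rightarrow> quat \<times> quat" where
  "hol A = (case A of (a,b,r,s) \<Rightarrow> (a,b))"

definition hol_mult :: "quat \<times> quat \<Rightarrow> quat \<times> quat \<Rightarrow> quat \<times> quat" where
  "hol_mult P Q = (case P of (a,b) \<Rightarrow> case Q of (a',b') \<Rightarrow> (a * a', a * b' + b))"

end

theory Submission
  imports Defs
begin

text \<open>
  The last coordinate s of (a, b, r, s) adds up under multiplication, so for A, B in \<Gamma> the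
  element AB(BA)\<inverse> of \<Gamma> has s = 0. An element with s = 0 whose holonomy is not the
  identity has a fixed point in \<bbbH>^2 (solve a x + r = x, or b y + r = 0, in the division
  ring \<bbbH>), so freeness gives h(AB) = h(BA). Hence the linear parts a of h(\<Gamma>) commute
  pairwise, and a quaternion commuting with a non-real a0 has imaginary part parallel to
  that of a0; all of them therefore lie in the plane spanned by 1 and the unit imaginary
  direction of a0.
\<close>

lemma quat_norm2_pos:
  fixes a :: quat
  assumes "a \<noteq> 0"
  shows "qr a ^ 2 + qi a ^ 2 + qj a ^ 2 + qk a ^ 2 > 0"
proof -
  have "qr a \<noteq> 0 \<or> qi a \<noteq> 0 \<or> qj a \<noteq> 0 \<or> qk a \<noteq> 0"
    using assms by (auto simp: quat_eq_iff zero_quat_def)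
  then show ?thesis
    by (smt (verit) zero_le_power2 zero_less_power2)
qed

instantiation quat :: division_ring
begin
definition inverse_quat :: "quat \<Rightarrow> quat" where
  "inverse_quat a = (let N = qr a ^ 2 + qi a ^ 2 + qj a ^ 2 + qk a ^ 2 in
    Quat (qr a / N) (- qi a / N) (- qj a / N) (- qk a / N))"
definition divide_quat :: "quat \<Rightarrow> quat \<Rightarrow> quat" where
  "divide_quat a b = a * inverse b"
instance
proof
  fix a :: quat
  assume "a \<noteq> 0"
  define N where "N = qr a ^ 2 + qi a ^ 2 + qj a ^ 2 + qk a ^ 2"
  have "N \<noteq> 0"
    using quat_norm2_pos[OF \<open>a \<noteq> 0\<close>] by (simp add: N_def)
  have inv: "inverse a = Quat (qr a / N) (- qi a / N) (- qj a / N) (- qk a / N)"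
    by (simp add: inverse_quat_def N_def Let_def)
  show "inverse a * a = 1" "a * inverse a = 1"
    unfolding inv using \<open>N \<noteq> 0\<close>
    by (simp_all add: quat_eq_iff times_quat_def one_quat_def field_simps)
      (simp_all add: N_def power2_eq_square algebra_simps)
qed (simp_all add: divide_quat_def inverse_quat_def zero_quat_def)
end

lemma quat_in_Reals_iff: "a \<in> \<real> \<longleftrightarrow> qi a = 0 \<and> qj a = 0 \<and> qk a = 0"
proof
  assume "a \<in> \<real>" then show "qi a = 0 \<and> qj a = 0 \<and> qk a = 0"
    by (auto elim!: Reals_cases simp: of_real_def scaleR_quat_def one_quat_def)
next
  assume "qi a = 0 \<and> qj a = 0 \<and> qk a = 0"
  then have "a = of_real (qr a)"
    by (simp add: quat_eq_iff of_real_def scaleR_quat_def one_quat_def)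
  then show "a \<in> \<real>" by (metis Reals_of_real)
qed

lemma Reals_subset_complex_plane: "\<real> \<subseteq> complex_plane I"
proof
  fix x :: quat
  assume "x \<in> \<real>"
  then obtain r where "x = of_real r + of_real 0 * I" by (auto elim!: Reals_cases)
  then show "x \<in> complex_plane I" unfolding complex_plane_def by blast
qed

definition im_norm :: "quat \<Rightarrow> real" where
  "im_norm a = sqrt (qi a ^ 2 + qj a ^ 2 + qk a ^ 2)"

definition im_unit :: "quat \<Rightarrow> quat" where
  "im_unit a = Quat 0 (qi a / im_norm a) (qj a / im_norm a) (qk a / im_norm a)"

lemma im_norm_square: "im_norm a * im_norm a = qi a ^ 2 + qj a ^ 2 + qk a ^ 2"
  by (simp add: im_norm_def)

lemma im_norm_pos:
  assumes "a \<notin> \<real>"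
  shows "im_norm a > 0"
proof -
  have "qi a ^ 2 + qj a ^ 2 + qk a ^ 2 > 0"
    using assms unfolding quat_in_Reals_iff by (smt (verit) zero_le_power2 zero_less_power2)
  then show ?thesis by (simp add: im_norm_def)
qed

lemma im_unit_square:
  assumes "a \<notin> \<real>"
  shows "im_unit a * im_unit a = -1"
proof -
  have "(qi a / im_norm a)\<^sup>2 + (qj a / im_norm a)\<^sup>2 + (qk a / im_norm a)\<^sup>2
      = (qi a ^ 2 + qj a ^ 2 + qk a ^ 2) / (im_norm a * im_norm a)"
    by (simp add: power_divide add_divide_distrib power2_eq_square)
  also have "\<dots> = 1"
    using im_norm_pos[OF assms] by (simp add: im_norm_square[symmetric])
  finally show ?thesis
    by (simp add: im_unit_def quat_eq_iff times_quat_def one_quat_def uminus_quat_def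
        power2_eq_square)
qed

lemma commute_in_complex_plane_im_unit:
  assumes "a0 \<notin> \<real>" and "a * a0 = a0 * a"
  shows "a \<in> complex_plane (im_unit a0)"
proof -
  define n where "n = im_norm a0"
  define d where "d = qi a * qi a0 + qj a * qj a0 + qk a * qk a0"
  have "n > 0" using im_norm_pos[OF assms(1)] by (simp add: n_def)
  have cross: "qj a * qk a0 = qk a * qj a0" "qk a * qi a0 = qi a * qk a0"
    "qi a * qj a0 = qj a * qi a0"
    using assms(2) by (simp_all add: quat_eq_iff times_quat_def, simp_all add: mult.commute)
  then have parallel: "qi a * (n * n) = d * qi a0" "qj a * (n * n) = d * qj a0"
    "qk a * (n * n) = d * qk a0"
    by (simp_all add: n_def im_norm_square d_def power2_eq_square algebra_simps)
      (metis mult.commute mult.left_commute)+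
  have "a = of_real (qr a) + of_real (d / n) * im_unit a0"
    using parallel \<open>n > 0\<close>
    by (simp add: im_unit_def n_def[symmetric] quat_eq_iff times_quat_def plus_quat_def
        of_real_def scaleR_quat_def one_quat_def field_simps)
  then show ?thesis unfolding complex_plane_def by blast
qed

lemma commuting_quats_in_complex_plane:
  fixes S :: "quat set"
  assumes "\<And>a b. a \<in> S \<Longrightarrow> b \<in> S \<Longrightarrow> a * b = b * a"
  shows "\<exists>I. I * I = -1 \<and> S \<subseteq> complex_plane I"
proof (cases "S \<subseteq> \<real>")
  case True
  have "Quat 0 1 0 0 * Quat 0 1 0 0 = -1"
    by (simp add: quat_eq_iff times_quat_def one_quat_def uminus_quat_def)
  with True Reals_subset_complex_plane show ?thesis by blast
next
  case False
  then obtain a0 where "a0 \<in> S" "a0 \<notin> \<real>" by blast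
  with assms im_unit_square commute_in_complex_plane_im_unit show ?thesis by blast
qed

lemma G1_one: "\<one>\<^bsub>G1\<^esub> = (1, 0, 0, 0)"
  by (simp add: G1_def)

lemma G1_mult:
  "(a, b, r, s) \<otimes>\<^bsub>G1\<^esub> (a', b', r', s') = (a * a', a * b' + b, a * r' + b * s' + r, s + s')"
  by (simp add: G1_def g1_mult_def)

lemma group_G1: "group G1"
proof (rule groupI)
  fix x
  assume "x \<in> carrier G1"
  then obtain a b r s where x: "x = (a, b, r, s)" "a \<noteq> 0" by (auto simp: G1_def)
  let ?y = "(inverse a, - inverse a * b, - inverse a * r + inverse a * b * s, - s)"
  have "?y \<in> carrier G1" "?y \<otimes>\<^bsub>G1\<^esub> x = \<one>\<^bsub>G1\<^esub>"
    using x by (simp_all add: G1_def g1_mult_def)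
  then show "\<exists>y\<in>carrier G1. y \<otimes>\<^bsub>G1\<^esub> x = \<one>\<^bsub>G1\<^esub>" by blast
qed (auto simp: G1_def g1_mult_def algebra_simps)

lemma hol_G1_mult: "hol (A \<otimes>\<^bsub>G1\<^esub> B) = hol_mult (hol A) (hol B)"
  by (cases A; cases B) (simp add: G1_mult hol_def hol_mult_def)

lemma hol_mult_one_left: "hol_mult (1, 0) P = P"
  by (cases P) (simp add: hol_mult_def)

lemma hol_mult_commute_fst: "hol_mult P Q = hol_mult Q P \<Longrightarrow> fst P * fst Q = fst Q * fst P"
  by (cases P; cases Q) (simp add: hol_mult_def)

definition vert_transl :: "g1 \<Rightarrow> quat" where
  "vert_transl A = (case A of (a, b, r, s) \<Rightarrow> s)"

lemma vert_transl_G1_mult: "vert_transl (A \<otimes>\<^bsub>G1\<^esub> B) = vert_transl A + vert_transl B"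
  by (cases A; cases B) (simp add: G1_mult vert_transl_def)

lemma g1_act_has_fixed_point:
  assumes "(a, b) \<noteq> (1, 0)"
  shows "\<exists>p. g1_act (a, b, r, 0) p = p"
proof (cases "a = 1")
  case False
  define x where "x = - (inverse (a - 1) * r)"
  have "(a - 1) * x = - r"
    using False by (simp add: x_def mult.assoc[symmetric])
  then have "a * x + r = x" by (simp add: algebra_simps)
  then have "g1_act (a, b, r, 0) (x, 0) = (x, 0)" by (simp add: g1_act_def)
  then show ?thesis by blast
next
  case True
  with assms have "b \<noteq> 0" by simp
  then have "g1_act (a, b, r, 0) (0, - (inverse b * r)) = (0, - (inverse b * r))"
    using True by (simp add: g1_act_def mult.assoc[symmetric])
  then show ?thesis by blast
qed

lemma acts_freely_hol_eq_one:
  assumes "acts_freely \<Gamma>" and "A \<in> \<Gamma>" and "vert_transl A = 0"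
  shows "hol A = (1, 0)"
proof (rule ccontr)
  obtain a b r where A: "A = (a, b, r, 0)"
    using assms(3) by (cases A) (simp add: vert_transl_def)
  assume "hol A \<noteq> (1, 0)"
  then have "A \<noteq> \<one>\<^bsub>G1\<^esub>" and "\<exists>p. g1_act A p = p"
    using g1_act_has_fixed_point[of a b r] by (auto simp: A hol_def G1_one)
  with assms(1,2) show False unfolding acts_freely_def by blast
qed

lemma hol_commute:
  assumes "subgroup \<Gamma> G1" and "acts_freely \<Gamma>" and "A \<in> \<Gamma>" and "B \<in> \<Gamma>"
  shows "hol_mult (hol A) (hol B) = hol_mult (hol B) (hol A)"
proof -
  interpret G1: group G1 by (rule group_G1)
  interpret \<Gamma>: subgroup \<Gamma> G1 by (rule assms(1))
  define X where "X = A \<otimes>\<^bsub>G1\<^esub> B"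
  define Y where "Y = B \<otimes>\<^bsub>G1\<^esub> A"
  define Z where "Z = X \<otimes>\<^bsub>G1\<^esub> inv\<^bsub>G1\<^esub> Y"
  have "X \<in> \<Gamma>" "Y \<in> \<Gamma>" using assms(3,4) by (simp_all add: X_def Y_def)
  then have "Z \<in> \<Gamma>" and ZY: "Z \<otimes>\<^bsub>G1\<^esub> Y = X"
    by (simp_all add: Z_def G1.m_assoc)
  have "vert_transl Z + vert_transl Y = vert_transl X"
    using ZY vert_transl_G1_mult by metis
  moreover have "vert_transl X = vert_transl Y"
    by (simp add: X_def Y_def vert_transl_G1_mult add.commute)
  ultimately have "hol Z = (1, 0)"
    using acts_freely_hol_eq_one[OF assms(2) \<open>Z \<in> \<Gamma>\<close>] by simp
  then have "hol X = hol Y"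
    by (metis ZY hol_G1_mult hol_mult_one_left)
  then show ?thesis by (simp add: X_def Y_def hol_G1_mult)
qed

theorem mainTheorem9:
  fixes \<Gamma> :: "g1 set"
  assumes "subgroup \<Gamma> G1"
    and "acts_freely \<Gamma>"
  shows "(\<forall>P\<in>hol ` \<Gamma>. \<forall>Q\<in>hol ` \<Gamma>. hol_mult P Q = hol_mult Q P)
    \<and> (\<exists>I::quat. I * I = -1 \<and> (\<forall>a b. (a, b) \<in> hol ` \<Gamma> \<longrightarrow> a \<in> complex_plane I))"
proof
  show "\<forall>P\<in>hol ` \<Gamma>. \<forall>Q\<in>hol ` \<Gamma>. hol_mult P Q = hol_mult Q P"
    using hol_commute[OF assms] by blast
  then have comm: "a * a' = a' * a" if "a \<in> fst ` hol ` \<Gamma>" "a' \<in> fst ` hol ` \<Gamma>" for a a'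
    using that by (blast intro: hol_mult_commute_fst)
  obtain I where I: "I * I = -1" "fst ` hol ` \<Gamma> \<subseteq> complex_plane I"
    using commuting_quats_in_complex_plane[OF comm] by blast
  have "a \<in> complex_plane I" if "(a, b) \<in> hol ` \<Gamma>" for a b
  proof -
    have "a \<in> fst ` hol ` \<Gamma>" using that by (rule image_eqI[rotated]) simp
    with I(2) show ?thesis by blast
  qed
  with I(1) show "\<exists>I::quat. I * I = -1 \<and> (\<forall>a b. (a, b) \<in> hol ` \<Gamma> \<longrightarrow> a \<in> complex_plane I)"
    by blast
qed

end
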